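(* Let $(X,\le)$ be a poset, $E$ an equivalence relation on $X$ with ${\le}\subseteq E$, and $\alpha:X\to X$ an order automorphism of $(X,\le)$ with $\alpha\subseteq E$. Set $0=\alpha\circ({\le}^c)^\smile=({\le}^c)^\smile\circ\alpha$. Then for all $R\in\mathsf{Up}(\mathbf E)$: (i) ${\sim}^nR=(\alpha^\smile)^{\frac{n-1}{2}}\circ(R^c)^\smile\circ\alpha^{\frac{n+1}{2}}$ for all odd $n\ge1$; (ii) ${\sim}^nR=(\alpha^\smile)^{\frac n2}\circ R\circ\alpha^{\frac n2}$ for all even $n\ge2$; (iii) $-^nR=\alpha^{\frac{n+1}{2}}\circ(R^c)^\smile\circ(\alpha^\smile)^{\frac{n-1}{2}}$ for all odd $n\ge1$; (iv) $-^nR=\alpha^{\frac n2}\circ R\circ(\alpha^\smile)^{\frac n2}$ for all even $n\ge2$.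
   Context: For binary relations: converse $R^\smile=\{(x,y)\mid(y,x)\in R\}$; composition $R\circ S=\{(x,y)\mid\exists z\,((x,z)\in R,(z,y)\in S)\}$; $R^0=\mathrm{id}_X$, $R^{k+1}=R^k\circ R$. A function $\alpha$ is identified with its graph. For a poset $(X,\le)$ and an equivalence relation $E\supseteq{\le}$, $E$ is partially ordered by $(u,v)\preceq(x,y)$ iff $x\le u$ and $v\le y$; $\mathbf E=(E,\preceq)$ and $\mathsf{Up}(\mathbf E)$ is its set of up-sets. For $R\subseteq E$, $R^c=E\setminus R$. On $\mathsf{Up}(\mathbf E)$ define $R\backslash S=(R^\smile\circ S^c)^c$, $R/S=(R^c\circ S^\smile)^c$, ${\sim}R=R\backslash 0$, $-R=0/R$; ${\sim}^n$, $-^n$ are $n$-fold applications. An order automorphism is a bijection $\alpha$ with $x\le y\iff\alpha(x)\le\alpha(y)$. *)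

theory Defs
  imports Main
begin

text \<open>Relations are sets of pairs on a carrier X; composition R o S is relcomp (R O S),
  converse is converse.\<close>

definition graph_on :: "'a set \<Rightarrow> ('a \<Rightarrow> 'a) \<Rightarrow> 'a rel" where
  "graph_on X f = {(x, f x) | x. x \<in> X}"

primrec rpow :: "'a set \<Rightarrow> 'a rel \<Rightarrow> nat \<Rightarrow> 'a rel" where
  "rpow X R 0 = Id_on X"
| "rpow X R (Suc k) = rpow X R k O R"

definition rcompl :: "'a rel \<Rightarrow> 'a rel \<Rightarrow> 'a rel" where
  "rcompl E R = E - R"

definition Eord :: "'a rel \<Rightarrow> 'a \<times> 'a \<Rightarrow> 'a \<times> 'a \<Rightarrow> bool" where
  "Eord le p q \<longleftrightarrow> (fst q, fst p) \<in> le \<and> (snd p, snd q) \<in> le"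

definition UpE :: "'a rel \<Rightarrow> 'a rel \<Rightarrow> 'a rel set" where
  "UpE le E = {R. R \<subseteq> E \<and> (\<forall>p\<in>R. \<forall>q\<in>E. Eord le p q \<longrightarrow> q \<in> R)}"

definition rres :: "'a rel \<Rightarrow> 'a rel \<Rightarrow> 'a rel \<Rightarrow> 'a rel" where
  "rres E R S = rcompl E (converse R O rcompl E S)"

definition lres :: "'a rel \<Rightarrow> 'a rel \<Rightarrow> 'a rel \<Rightarrow> 'a rel" where
  "lres E R S = rcompl E (rcompl E R O converse S)"

definition order_automorphism :: "'a set \<Rightarrow> 'a rel \<Rightarrow> ('a \<Rightarrow> 'a) \<Rightarrow> bool" where
  "order_automorphism X le f \<longleftrightarrow> bij_betw f X X \<and>
     (\<forall>x\<in>X. \<forall>y\<in>X. (x, y) \<in> le \<longleftrightarrow> (f x, f y) \<in> le)"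

end

theory Submission
  imports Defs
begin

text \<open>Let \<open>G\<close> be the graph of \<open>\<alpha>\<close>. The complement of \<open>0\<close> in \<open>E\<close> is
  \<open>G \<circ> \<ge>\<close>; since \<open>\<alpha>\<close> is an order automorphism, \<open>G\<close> commutes with \<open>\<le>\<close> and \<open>\<ge>\<close>,
  and an up-set \<open>S\<close> satisfies \<open>\<le> \<circ> S = S = S \<circ> \<le>\<close>. Hence \<open>\<sim>S = (S\<^sup>c)\<^sup>\<smile> \<circ> G\<close> and
  \<open>-S = G \<circ> (S\<^sup>c)\<^sup>\<smile>\<close>, again up-sets. Complementation in \<open>E\<close> commutes with converse and
  with composition by the bijection \<open>G \<subseteq> E\<close>, so applying \<open>\<sim>\<close> twice conjugates by \<open>G\<close>:
  \<open>\<sim>\<sim>S = G\<^sup>\<smile> \<circ> S \<circ> G\<close>, and dually \<open>--S = G \<circ> S \<circ> G\<^sup>\<smile>\<close>. The closed forms follow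
  by iterating this conjugation.\<close>

lemma rcompl_converse:
  assumes "sym E"
  shows "rcompl E (converse R) = converse (rcompl E R)"
  using assms by (auto simp: rcompl_def sym_def)

lemma rcompl_rcompl:
  assumes "R \<subseteq> E"
  shows "rcompl E (rcompl E R) = R"
  using assms by (auto simp: rcompl_def)

lemma rcompl_graph_O:
  assumes "equiv X E" and "graph_on X f \<subseteq> E"
  shows "rcompl E (graph_on X f O R) = graph_on X f O rcompl E R"
proof (intro subset_antisym subrelI)
  have E_iff: "(x, y) \<in> E \<longleftrightarrow> (f x, y) \<in> E" if "x \<in> X" for x y
    using assms that unfolding equiv_def graph_on_def by (blast elim: symE transE)
  fix x y
  show "(x, y) \<in> graph_on X f O rcompl E R" if "(x, y) \<in> rcompl E (graph_on X f O R)"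
  proof -
    have "x \<in> X"
      using that assms(1) by (auto simp: rcompl_def equiv_def refl_on_def)
    with that E_iff have "(f x, y) \<in> rcompl E R"
      by (auto simp: rcompl_def graph_on_def)
    with \<open>x \<in> X\<close> show ?thesis
      unfolding graph_on_def by blast
  qed
  show "(x, y) \<in> rcompl E (graph_on X f O R)" if "(x, y) \<in> graph_on X f O rcompl E R"
    using that E_iff by (auto simp: rcompl_def graph_on_def)
qed

lemma rcompl_O_graph:
  assumes "equiv X E" and "graph_on X f \<subseteq> E" and "bij_betw f X X"
  shows "rcompl E (R O graph_on X f) = rcompl E R O graph_on X f"
proof (intro subset_antisym subrelI)
  have E_iff: "(x, w) \<in> E \<longleftrightarrow> (x, f w) \<in> E" if "w \<in> X" for x w
    using assms that unfolding equiv_def graph_on_def by (blast elim: symE transE)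
  fix x y
  show "(x, y) \<in> rcompl E R O graph_on X f" if xy: "(x, y) \<in> rcompl E (R O graph_on X f)"
  proof -
    have "y \<in> X"
      using xy assms(1) by (auto simp: rcompl_def equiv_def refl_on_def)
    then obtain w where w: "w \<in> X" "y = f w"
      using assms(3) by (auto simp: bij_betw_def)
    with xy E_iff have "(x, w) \<in> rcompl E R"
      by (auto simp: rcompl_def graph_on_def)
    with w show ?thesis
      unfolding graph_on_def by blast
  qed
  show "(x, y) \<in> rcompl E (R O graph_on X f)" if xy: "(x, y) \<in> rcompl E R O graph_on X f"
  proof -
    obtain w where w: "w \<in> X" "y = f w" "(x, w) \<in> E" "(x, w) \<notin> R"
      using xy by (auto simp: rcompl_def graph_on_def)
    have "(x, y) \<notin> R O graph_on X f"
      using w assms(3) by (auto simp: graph_on_def bij_betw_def inj_on_def)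
    with w E_iff show ?thesis
      by (auto simp: rcompl_def)
  qed
qed

lemma rpow_commute:
  assumes "R \<subseteq> X \<times> X"
  shows "rpow X R k O R = R O rpow X R k"
proof (induction k)
  case 0
  show ?case using assms by auto
next
  case (Suc k)
  then show ?case by (simp add: O_assoc)
qed

lemma funpow_relcomp_sandwich:
  assumes "A \<subseteq> X \<times> X" and "B \<subseteq> X \<times> X" and "S \<subseteq> X \<times> X"
  shows "((\<lambda>S. A O S O B) ^^ k) S = rpow X A k O S O rpow X B k"
proof (induction k)
  case 0
  show ?case using assms(3) by auto
next
  case (Suc k)
  then show ?case
    using rpow_commute[OF assms(1), of k] by (simp add: O_assoc)
qed

lemma funpow_double_eq:
  assumes "\<And>S. S \<in> U \<Longrightarrow> f S \<in> U" and "\<And>S. S \<in> U \<Longrightarrow> f (f S) = g S" and "S \<in> U"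
  shows "(f ^^ (2 * k)) S = (g ^^ k) S"
proof (induction k)
  case 0
  show ?case by simp
next
  case (Suc k)
  have "(f ^^ n) S \<in> U" for n
    by (induction n) (simp_all add: assms)
  then have "(f ^^ (2 * Suc k)) S = g ((f ^^ (2 * k)) S)"
    by (simp add: assms(2))
  with Suc show ?case
    by simp
qed

lemma UpE_iff:
  assumes "le \<subseteq> E" and "trans E"
  shows "S \<in> UpE le E \<longleftrightarrow> S \<subseteq> E \<and> le O S O le \<subseteq> S"
proof
  assume S: "S \<in> UpE le E"
  have "(x, y) \<in> S" if "(x, u) \<in> le" "(u, v) \<in> S" "(v, y) \<in> le" for x y u v
  proof -
    have "(x, u) \<in> E" "(u, v) \<in> E" "(v, y) \<in> E"
      using that S assms(1) by (auto simp: UpE_def)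
    then have "(x, y) \<in> E"
      using assms(2) by (meson transD)
    with that S show ?thesis
      by (auto simp: UpE_def Eord_def)
  qed
  with S show "S \<subseteq> E \<and> le O S O le \<subseteq> S"
    by (auto simp: UpE_def)
next
  assume S: "S \<subseteq> E \<and> le O S O le \<subseteq> S"
  have "(x, y) \<in> S" if "(x, u) \<in> le" "(u, v) \<in> S" "(v, y) \<in> le" for x y u v
    using S that by (meson relcompI subsetD)
  with S show "S \<in> UpE le E"
    unfolding UpE_def Eord_def by fastforce
qed

locale automorphism_in_equivalence =
  fixes X :: "'a set" and le E :: "'a rel" and \<alpha> :: "'a \<Rightarrow> 'a"
  assumes partial_order: "partial_order_on X le"
    and equiv: "equiv X E"
    and le_subset: "le \<subseteq> E"
    and automorphism: "order_automorphism X le \<alpha>"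
    and graph_subset: "graph_on X \<alpha> \<subseteq> E"
begin

abbreviation G :: "'a rel" where
  "G \<equiv> graph_on X \<alpha>"

abbreviation zero :: "'a rel" where
  "zero \<equiv> G O converse (rcompl E le)"

lemma E_subset: "E \<subseteq> X \<times> X"
  using equiv by (simp add: equiv_def refl_on_def)

lemma sym_E: "sym E" and trans_E: "trans E"
  using equiv by (simp_all add: equiv_def)

lemma alpha_bij: "bij_betw \<alpha> X X"
  using automorphism by (simp add: order_automorphism_def)

lemma G_subset: "G \<subseteq> X \<times> X"
  using alpha_bij by (auto simp: graph_on_def bij_betw_def)

lemma alpha_le_iff: "x \<in> X \<Longrightarrow> y \<in> X \<Longrightarrow> (\<alpha> x, \<alpha> y) \<in> le \<longleftrightarrow> (x, y) \<in> le"
  using automorphism by (simp add: order_automorphism_def)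

lemma le_subset_X: "le \<subseteq> X \<times> X"
  using le_subset E_subset by blast

lemma alpha_surj: "y \<in> X \<Longrightarrow> \<exists>w\<in>X. y = \<alpha> w"
  using alpha_bij by (auto simp: bij_betw_def)

lemma G_le_commute: "G O le = le O G"
proof (intro subset_antisym subrelI)
  fix x y
  assume "(x, y) \<in> G O le"
  then have xy: "x \<in> X" "(\<alpha> x, y) \<in> le"
    by (auto simp: graph_on_def)
  then obtain w where "w \<in> X" "y = \<alpha> w"
    using le_subset_X alpha_surj by blast
  with xy alpha_le_iff show "(x, y) \<in> le O G"
    unfolding graph_on_def by blast
next
  fix x y
  assume "(x, y) \<in> le O G"
  then obtain w where "(x, w) \<in> le" "w \<in> X" "y = \<alpha> w"
    by (auto simp: graph_on_def)
  with le_subset_X alpha_le_iff show "(x, y) \<in> G O le"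
    unfolding graph_on_def by blast
qed

lemma G_converse_le_commute: "G O converse le = converse le O G"
proof (intro subset_antisym subrelI)
  fix x y
  assume "(x, y) \<in> G O converse le"
  then have xy: "x \<in> X" "(y, \<alpha> x) \<in> le"
    by (auto simp: graph_on_def)
  then obtain w where "w \<in> X" "y = \<alpha> w"
    using le_subset_X alpha_surj by blast
  with xy alpha_le_iff show "(x, y) \<in> converse le O G"
    unfolding graph_on_def by blast
next
  fix x y
  assume "(x, y) \<in> converse le O G"
  then obtain w where "(w, x) \<in> le" "w \<in> X" "y = \<alpha> w"
    by (auto simp: graph_on_def)
  with le_subset_X alpha_le_iff show "(x, y) \<in> G O converse le"
    unfolding graph_on_def by blast
qed

lemma UpE_iff_le: "S \<in> UpE le E \<longleftrightarrow> S \<subseteq> E \<and> le O S O le \<subseteq> S"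
  using UpE_iff[OF le_subset trans_E] .

lemma UpE_absorb:
  assumes "S \<in> UpE le E"
  shows "le O S = S" and "S O le = S"
proof -
  have S: "S \<subseteq> X \<times> X" "le O S O le \<subseteq> S"
    using assms E_subset by (auto simp: UpE_iff_le)
  have refl: "(x, x) \<in> le" if "x \<in> X" for x
    using partial_order that by (auto simp: partial_order_on_def preorder_on_def refl_on_def)
  show "le O S = S" and "S O le = S"
    using S refl by blast+
qed

lemma UpE_converse_rcompl:
  assumes "S \<in> UpE le E"
  shows "converse (rcompl E S) \<in> UpE le E"
proof -
  have S: "S \<subseteq> E" "le O S O le \<subseteq> S"
    using assms by (auto simp: UpE_iff_le)
  have "(y, x) \<in> rcompl E S"
    if "(x, u) \<in> le" "(v, u) \<in> rcompl E S" "(v, y) \<in> le" for x y u v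
  proof -
    have "(y, x) \<in> E"
      using that le_subset sym_E trans_E unfolding rcompl_def by (blast elim: symE transE)
    moreover have "(y, x) \<notin> S"
      using that S unfolding rcompl_def by blast
    ultimately show ?thesis
      by (simp add: rcompl_def)
  qed
  moreover have "converse (rcompl E S) \<subseteq> E"
    using sym_E by (auto simp: rcompl_def elim: symE)
  ultimately show ?thesis
    unfolding UpE_iff_le by blast
qed

lemma UpE_O_G:
  assumes "T \<in> UpE le E"
  shows "T O G \<in> UpE le E"
proof -
  have T: "T \<subseteq> E" "le O T O le \<subseteq> T"
    using assms by (auto simp: UpE_iff_le)
  have "T O G \<subseteq> E"
    using T graph_subset trans_E by (blast elim: transE)
  moreover have "le O (T O G) O le = (le O T O le) O G"
    by (simp add: O_assoc G_le_commute)
  ultimately show ?thesis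
    using T unfolding UpE_iff_le by (metis relcomp_mono order_refl)
qed

lemma UpE_G_O:
  assumes "T \<in> UpE le E"
  shows "G O T \<in> UpE le E"
proof -
  have T: "T \<subseteq> E" "le O T O le \<subseteq> T"
    using assms by (auto simp: UpE_iff_le)
  have "G O T \<subseteq> E"
    using T graph_subset trans_E by (blast elim: transE)
  moreover have "le O (G O T) O le = G O (le O T O le)"
    by (simp add: G_le_commute flip: O_assoc)
  ultimately show ?thesis
    using T unfolding UpE_iff_le by (metis relcomp_mono order_refl)
qed

lemma rcompl_zero: "rcompl E zero = G O converse le"
proof -
  have "converse le \<subseteq> E"
    using le_subset sym_E by (auto elim: symE)
  then show ?thesis
    by (simp add: rcompl_converse[OF sym_E, symmetric] rcompl_graph_O[OF equiv graph_subset]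
        rcompl_rcompl)
qed

lemma rres_zero:
  assumes "S \<in> UpE le E"
  shows "rres E S zero = converse (rcompl E S) O G"
proof -
  have "rres E S zero = rcompl E (converse S O G O converse le)"
    by (simp add: rres_def rcompl_zero)
  also have "\<dots> = rcompl E (converse (le O S) O G)"
    by (simp add: G_converse_le_commute converse_relcomp O_assoc)
  also have "\<dots> = converse (rcompl E S) O G"
    by (simp add: UpE_absorb[OF assms] rcompl_O_graph[OF equiv graph_subset alpha_bij]
        rcompl_converse[OF sym_E])
  finally show ?thesis .
qed

lemma lres_zero:
  assumes "S \<in> UpE le E"
  shows "lres E zero S = G O converse (rcompl E S)"
proof -
  have "lres E zero S = rcompl E (G O converse (S O le))"
    by (simp add: lres_def rcompl_zero converse_relcomp O_assoc)
  also have "\<dots> = G O converse (rcompl E S)"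
    by (simp add: UpE_absorb[OF assms] rcompl_graph_O[OF equiv graph_subset]
        rcompl_converse[OF sym_E])
  finally show ?thesis .
qed

lemma rres_zero_UpE: "S \<in> UpE le E \<Longrightarrow> rres E S zero \<in> UpE le E"
  by (simp add: rres_zero UpE_O_G UpE_converse_rcompl)

lemma lres_zero_UpE: "S \<in> UpE le E \<Longrightarrow> lres E zero S \<in> UpE le E"
  by (simp add: lres_zero UpE_G_O UpE_converse_rcompl)

lemma rres_zero_twice:
  assumes "S \<in> UpE le E"
  shows "rres E (rres E S zero) zero = converse G O S O G"
proof -
  have "S \<subseteq> E"
    using assms by (simp add: UpE_def)
  have "rres E (rres E S zero) zero = converse (rcompl E (converse (rcompl E S) O G)) O G"
    using rres_zero_UpE[OF assms] by (simp add: rres_zero assms)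
  also have "\<dots> = converse G O S O G"
    using \<open>S \<subseteq> E\<close> by (simp add: rcompl_O_graph[OF equiv graph_subset alpha_bij]
        rcompl_converse[OF sym_E, symmetric] rcompl_rcompl converse_relcomp O_assoc)
  finally show ?thesis .
qed

lemma lres_zero_twice:
  assumes "S \<in> UpE le E"
  shows "lres E zero (lres E zero S) = G O S O converse G"
proof -
  have "S \<subseteq> E"
    using assms by (simp add: UpE_def)
  have "lres E zero (lres E zero S) = G O converse (rcompl E (G O converse (rcompl E S)))"
    using lres_zero_UpE[OF assms] by (simp add: lres_zero assms)
  also have "\<dots> = G O S O converse G"
    using \<open>S \<subseteq> E\<close> by (simp add: rcompl_graph_O[OF equiv graph_subset]
        rcompl_converse[OF sym_E, symmetric] rcompl_rcompl converse_relcomp O_assoc)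
  finally show ?thesis .
qed

lemma UpE_subset_X: "S \<in> UpE le E \<Longrightarrow> S \<subseteq> X \<times> X"
  using E_subset by (auto simp: UpE_def)

lemma rres_zero_iterate_even:
  assumes "R \<in> UpE le E"
  shows "((\<lambda>S. rres E S zero) ^^ (2 * k)) R = rpow X (converse G) k O R O rpow X G k"
proof -
  have "converse G \<subseteq> X \<times> X"
    using G_subset by auto
  then show ?thesis
    using funpow_double_eq[where f = "\<lambda>S. rres E S zero" and g = "\<lambda>S. converse G O S O G",
        OF rres_zero_UpE rres_zero_twice assms]
      funpow_relcomp_sandwich[OF _ G_subset UpE_subset_X[OF assms]] by simp
qed

lemma rres_zero_iterate_odd:
  assumes "R \<in> UpE le E"
  shows "((\<lambda>S. rres E S zero) ^^ Suc (2 * k)) R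
    = rpow X (converse G) k O converse (rcompl E R) O rpow X G (Suc k)"
proof -
  have "((\<lambda>S. rres E S zero) ^^ Suc (2 * k)) R = ((\<lambda>S. rres E S zero) ^^ (2 * k)) (rres E R zero)"
    by (simp only: funpow_Suc_right comp_apply)
  also have "\<dots> = rpow X (converse G) k O converse (rcompl E R) O (G O rpow X G k)"
    using rres_zero_iterate_even[OF rres_zero_UpE[OF assms]] by (simp add: rres_zero assms O_assoc)
  finally show ?thesis
    by (simp add: rpow_commute[OF G_subset])
qed

lemma lres_zero_iterate_even:
  assumes "R \<in> UpE le E"
  shows "((\<lambda>S. lres E zero S) ^^ (2 * k)) R = rpow X G k O R O rpow X (converse G) k"
proof -
  have "converse G \<subseteq> X \<times> X"
    using G_subset by auto
  then show ?thesis
    using funpow_double_eq[where f = "\<lambda>S. lres E zero S" and g = "\<lambda>S. G O S O converse G",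
        OF lres_zero_UpE lres_zero_twice assms]
      funpow_relcomp_sandwich[OF G_subset _ UpE_subset_X[OF assms]] by simp
qed

lemma lres_zero_iterate_odd:
  assumes "R \<in> UpE le E"
  shows "((\<lambda>S. lres E zero S) ^^ Suc (2 * k)) R
    = rpow X G (Suc k) O converse (rcompl E R) O rpow X (converse G) k"
proof -
  have "((\<lambda>S. lres E zero S) ^^ Suc (2 * k)) R = ((\<lambda>S. lres E zero S) ^^ (2 * k)) (lres E zero R)"
    by (simp only: funpow_Suc_right comp_apply)
  also have "\<dots> = (rpow X G k O G) O converse (rcompl E R) O rpow X (converse G) k"
    using lres_zero_iterate_even[OF lres_zero_UpE[OF assms]] by (simp add: lres_zero assms O_assoc)
  finally show ?thesis
    by simp
qed

end

theorem lemma3p11: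
  fixes X :: "'a set" and le E :: "'a rel" and \<alpha> :: "'a \<Rightarrow> 'a" and Z :: "'a rel"
  assumes "partial_order_on X le"
    and "equiv X E"
    and "le \<subseteq> E"
    and "order_automorphism X le \<alpha>"
    and "graph_on X \<alpha> \<subseteq> E"
    and Z_def: "Z = graph_on X \<alpha> O converse (rcompl E le)"
  shows "\<forall>R \<in> UpE le E.
     (\<forall>n. odd n \<longrightarrow> ((\<lambda>S. rres E S Z) ^^ n) R =
        rpow X (converse (graph_on X \<alpha>)) ((n - 1) div 2) O converse (rcompl E R)
          O rpow X (graph_on X \<alpha>) ((n + 1) div 2))
   \<and> (\<forall>n. even n \<and> n \<ge> 2 \<longrightarrow> ((\<lambda>S. rres E S Z) ^^ n) R =
        rpow X (converse (graph_on X \<alpha>)) (n div 2) O R O rpow X (graph_on X \<alpha>) (n div 2))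
   \<and> (\<forall>n. odd n \<longrightarrow> ((\<lambda>S. lres E Z S) ^^ n) R =
        rpow X (graph_on X \<alpha>) ((n + 1) div 2) O converse (rcompl E R)
          O rpow X (converse (graph_on X \<alpha>)) ((n - 1) div 2))
   \<and> (\<forall>n. even n \<and> n \<ge> 2 \<longrightarrow> ((\<lambda>S. lres E Z S) ^^ n) R =
        rpow X (graph_on X \<alpha>) (n div 2) O R O rpow X (converse (graph_on X \<alpha>)) (n div 2))"
proof (intro ballI conjI allI impI)
  interpret automorphism_in_equivalence X le E \<alpha>
    using assms(1-5) by unfold_locales
  fix R assume R: "R \<in> UpE le E"
  fix n :: nat
  {
    assume "odd n"
    then obtain k where "n = Suc (2 * k)"
      using oddE by fastforce
    then show "((\<lambda>S. rres E S Z) ^^ n) R = rpow X (converse G) ((n - 1) div 2)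
        O converse (rcompl E R) O rpow X G ((n + 1) div 2)"
      and "((\<lambda>S. lres E Z S) ^^ n) R = rpow X G ((n + 1) div 2)
        O converse (rcompl E R) O rpow X (converse G) ((n - 1) div 2)"
      using rres_zero_iterate_odd[OF R] lres_zero_iterate_odd[OF R] Z_def by simp_all
  next
    assume "even n \<and> n \<ge> 2"
    then obtain k where "n = 2 * k"
      by blast
    then show "((\<lambda>S. rres E S Z) ^^ n) R = rpow X (converse G) (n div 2) O R O rpow X G (n div 2)"
      and "((\<lambda>S. lres E Z S) ^^ n) R = rpow X G (n div 2) O R O rpow X (converse G) (n div 2)"
      using rres_zero_iterate_even[OF R] lres_zero_iterate_even[OF R] Z_def by simp_all
  }
qed

end
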